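(* Let $\Omega$ be a compact metric space, $\varphi:\Omega\to\Omega$ continuous, and let $\{V_n\}\subset\mathcal{L}(X^* )$ be an ergodic operator sequence converging in the $\mathrm{W^*O}$-topology to an operator $Q$. Then for every $\varphi$-ergodic Borel probability measure $\mu$ on $\Omega$ there exists $\omega\in\Omega$ with $Q\delta_\omega=\mu$, i.e. $V_n\delta_\omega\to\mu$ weak-star.
   Context: $X=C(\Omega)$, $X^*$ the space of Radon measures, pairing $(x,\mu)$; $Ux=x\circ\varphi$, $V=U^*$. $\mathrm{W^*O}$-convergence $T_n\to T$ means $(x,T_n\mu)\to(x,T\mu)$ for all $x\in X,\mu\in X^*$. A sequence $\{V_n\}\subseteq\operatorname{co}\{V^k:k\in\mathbb{N}_0\}$ is ergodic if $(x,(\operatorname{Id}-V)V_n\mu)\to0$ for all $x\in X,\mu\in X^*$. $\delta_\omega$ denotes the Dirac measure at $\omega$. *)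

theory Defs
  imports "HOL-Analysis.Analysis" "HOL-Probability.Probability"
begin

text \<open>X = C(Omega) is modelled as the Banach space of (bounded) continuous real functions on
  the compact metric space (type) 'a; X* is its dual space of bounded linear functionals
  (identified with the Radon measures via the Riesz representation theorem).\<close>

type_synonym 'a Xsp = "'a \<Rightarrow>\<^sub>C real"
type_synonym 'a Xdual = "'a Xsp \<Rightarrow>\<^sub>L real"

definition Uop :: "('a::metric_space \<Rightarrow> 'a) \<Rightarrow> 'a Xsp \<Rightarrow>\<^sub>L 'a Xsp" where
  "Uop \<phi> = Blinfun (\<lambda>x. Bcontfun (apply_bcontfun x \<circ> \<phi>))"

definition Vop :: "('a::metric_space \<Rightarrow> 'a) \<Rightarrow> 'a Xdual \<Rightarrow>\<^sub>L 'a Xdual" where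
  "Vop \<phi> = Blinfun (\<lambda>\<mu>. \<mu> o\<^sub>L Uop \<phi>)"

definition Vpow :: "('a::metric_space \<Rightarrow> 'a) \<Rightarrow> nat \<Rightarrow> 'a Xdual \<Rightarrow>\<^sub>L 'a Xdual" where
  "Vpow \<phi> k = ((\<lambda>T. Vop \<phi> o\<^sub>L T) ^^ k) id_blinfun"

definition ergodic_seq :: "('a::metric_space \<Rightarrow> 'a) \<Rightarrow> (nat \<Rightarrow> 'a Xdual \<Rightarrow>\<^sub>L 'a Xdual) \<Rightarrow> bool" where
  "ergodic_seq \<phi> Vs \<longleftrightarrow>
     (\<forall>n. Vs n \<in> convex hull (range (Vpow \<phi>))) \<and>
     (\<forall>x \<mu>. (\<lambda>n. blinfun_apply ((id_blinfun - Vop \<phi>) (Vs n \<mu>)) x) \<longlonglongrightarrow> 0)"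

definition WsO_conv :: "(nat \<Rightarrow> 'a::metric_space Xdual \<Rightarrow>\<^sub>L 'a Xdual) \<Rightarrow> ('a Xdual \<Rightarrow>\<^sub>L 'a Xdual) \<Rightarrow> bool" where
  "WsO_conv Ts T \<longleftrightarrow> (\<forall>x \<mu>. (\<lambda>n. blinfun_apply (Ts n \<mu>) x) \<longlonglongrightarrow> blinfun_apply (T \<mu>) x)"

definition dirac_fun :: "'a::metric_space \<Rightarrow> 'a Xdual" where
  "dirac_fun \<omega> = Blinfun (\<lambda>x. apply_bcontfun x \<omega>)"

definition meas_fun :: "'a::metric_space measure \<Rightarrow> 'a Xdual" where
  "meas_fun \<mu> = Blinfun (\<lambda>x. \<integral>\<omega>. apply_bcontfun x \<omega> \<partial>\<mu>)"

definition phi_ergodic :: "('a::metric_space \<Rightarrow> 'a) \<Rightarrow> 'a measure \<Rightarrow> bool" where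
  "phi_ergodic \<phi> \<mu> \<longleftrightarrow> prob_space \<mu> \<and> sets \<mu> = sets borel \<and>
     \<phi> \<in> measurable \<mu> \<mu> \<and> distr \<mu> \<mu> \<phi> = \<mu> \<and>
     (\<forall>A \<in> sets \<mu>. \<phi> -` A = A \<longrightarrow> emeasure \<mu> A = 0 \<or> emeasure \<mu> A = 1)"

end

theory Submission
  imports Defs
begin

(*
  For x in C(\<Omega>) consider the function \<omega> \<mapsto> (x, Q \<delta>\<^sub>\<omega>). Every V\<^sub>n is a
  convex combination of powers of V and V \<delta>\<^sub>\<omega> = \<delta>\<^bsub>\<phi> \<omega>\<^esub>, so \<omega> \<mapsto> (x, V\<^sub>n \<delta>\<^sub>\<omega>)
  is continuous, bounded by the norm of x, and has \<mu>-integral \<integral>x d\<mu> because \<mu> is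
  \<phi>-invariant. By dominated convergence its pointwise limit (x, Q \<delta>\<^sub>\<omega>) is a bounded
  Borel function with the same integral. Ergodicity of the sequence gives V Q = Q, and Q
  commutes with V because every V\<^sub>n does, so this limit is \<phi>-invariant; as \<mu> is ergodic it
  equals \<integral>x d\<mu> for \<mu>-almost every \<omega>.

  C(\<Omega>) contains a countable set whose span is dense (by Stone-Weierstrass, the monomials in
  the distances to a countable dense subset of \<Omega>). Hence a single \<omega> satisfies
  (x, Q \<delta>\<^sub>\<omega>) = \<integral>x d\<mu> for all x in that set, and then for all x by continuity.
*)

lemma abs_apply_bcontfun_le: "\<bar>apply_bcontfun x \<omega>\<bar> \<le> norm (x :: 'a::topological_space \<Rightarrow>\<^sub>C real)"
  using norm_bounded[of x \<omega>] by simp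

lemma continuous_on_funpow:
  fixes f :: "'a::topological_space \<Rightarrow> 'a"
  assumes "continuous_on UNIV f"
  shows "continuous_on UNIV (f ^^ k)"
proof (induction k)
  case (Suc k)
  have "continuous_on UNIV (f \<circ> (f ^^ k))"
    by (rule continuous_on_compose[OF Suc]) (rule continuous_on_subset[OF assms], simp)
  then show ?case
    by simp
qed (simp add: continuous_on_id)

lemma measurable_funpow:
  assumes "f \<in> measurable M M"
  shows "f ^^ k \<in> measurable M M"
  by (induction k) (simp_all add: measurable_compose[OF _ assms])

lemma borel_measurable_continuous_on_sets_borel:
  assumes "sets M = sets borel" and "continuous_on UNIV f"
  shows "f \<in> borel_measurable M"
  using borel_measurable_continuous_onI[OF assms(2)] measurable_cong_sets[OF assms(1) refl] by blast

lemma integrable_bounded_continuous: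
  fixes f :: "'a::topological_space \<Rightarrow> real"
  assumes "finite_measure M" "sets M = sets borel" and "continuous_on UNIV f" and "\<And>\<omega>. \<bar>f \<omega>\<bar> \<le> B"
  shows "integrable M f"
  using assms
  by (intro finite_measure.integrable_const_bound[where B=B])
    (auto intro: borel_measurable_continuous_on_sets_borel)

lemma integral_funpow_preserving:
  fixes f :: "'a \<Rightarrow> real"
  assumes "\<phi> \<in> measurable M M" and "distr M M \<phi> = M" and "f \<in> borel_measurable M"
  shows "(\<integral>\<omega>. f ((\<phi> ^^ k) \<omega>) \<partial>M) = integral\<^sup>L M f"
proof (induction k)
  case (Suc k)
  have "(\<integral>\<omega>. f ((\<phi> ^^ Suc k) \<omega>) \<partial>M) = (\<integral>\<omega>. f ((\<phi> ^^ k) (\<phi> \<omega>)) \<partial>M)"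
    by (simp add: funpow_swap1)
  also have "\<dots> = (\<integral>\<omega>. f ((\<phi> ^^ k) \<omega>) \<partial>distr M M \<phi>)"
    using measurable_compose[OF measurable_funpow[OF assms(1)] assms(3)]
    by (rule integral_distr[OF assms(1), symmetric])
  finally show ?case
    using Suc assms(2) by simp
qed simp

section \<open>A countable subset of C(\<Omega>) with dense span\<close>

lemma compact_continuous_in_bcontfun:
  assumes "compact (UNIV :: 'a::topological_space set)" and "continuous_on UNIV f"
  shows "(f :: 'a \<Rightarrow> 'b::metric_space) \<in> bcontfun"
  using compact_imp_bounded[OF compact_continuous_image[OF assms(2,1)]] assms(2)
  by (simp add: bcontfun_def)

lemma compact_countable_dense_setE:
  assumes "compact (UNIV :: 'a set)"
  obtains D :: "'a::metric_space set" where "countable D" "\<And>x e. 0 < e \<Longrightarrow> \<exists>d\<in>D. dist x d < e"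
proof -
  have "\<forall>n::nat. \<exists>K. finite K \<and> (UNIV :: 'a set) \<subseteq> (\<Union>d\<in>K. ball d (1 / Suc n))"
    using assms unfolding compact_eq_totally_bounded by simp
  then obtain K where K: "\<And>n. finite (K n)" "\<And>n. (UNIV :: 'a set) \<subseteq> (\<Union>d\<in>K n. ball d (1 / Suc n))"
    by metis
  show ?thesis
  proof
    show "countable (\<Union>n. K n)"
      using K(1) by (simp add: countable_finite)
    show "\<exists>d\<in>\<Union>n. K n. dist x d < e" if "0 < e" for x e
    proof -
      obtain n where "1 / Suc n < e"
        using \<open>0 < e\<close> nat_approx_posE by blast
      moreover obtain d where "d \<in> K n" "dist d x < 1 / Suc n"
        using K(2)[of n] by (auto simp: subset_eq)
      ultimately have "d \<in> (\<Union>n. K n)" "dist x d < e"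
        by (auto simp: dist_commute)
      then show ?thesis ..
    qed
  qed
qed

lemma span_bcontfun_mult_left:
  fixes G :: "('a::topological_space \<Rightarrow>\<^sub>C real) set"
  assumes "g \<in> span G" and "\<And>g. g \<in> G \<Longrightarrow> \<exists>k\<in>span G. \<forall>x. k x = g x * h x"
  shows "\<exists>k\<in>span G. \<forall>x. k x = g x * h x"
proof -
  define S where "S = {g :: 'a \<Rightarrow>\<^sub>C real. \<exists>k\<in>span G. \<forall>x. k x = g x * h x}"
  have "0 \<in> S"
    unfolding S_def by (intro CollectI bexI[of _ 0] span_zero) simp_all
  moreover have "g1 + g2 \<in> S" if "g1 \<in> S" "g2 \<in> S" for g1 g2
  proof -
    from that obtain k1 k2 where "k1 \<in> span G" "\<forall>x. k1 x = g1 x * h x"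
      and "k2 \<in> span G" "\<forall>x. k2 x = g2 x * h x"
      by (auto simp: S_def)
    then show ?thesis
      unfolding S_def
      by (intro CollectI bexI[of _ "k1 + k2"] span_add) (simp_all add: distrib_right)
  qed
  moreover have "c *\<^sub>R g \<in> S" if "g \<in> S" for c g
  proof -
    from that obtain k where "k \<in> span G" "\<forall>x. k x = g x * h x"
      by (auto simp: S_def)
    then show ?thesis
      unfolding S_def by (intro CollectI bexI[of _ "c *\<^sub>R k"] span_scale) simp_all
  qed
  ultimately have "subspace S"
    by (simp add: subspace_def)
  moreover have "G \<subseteq> S"
    using assms(2) by (auto simp: S_def)
  ultimately have "span G \<subseteq> S"
    by (rule span_minimal[rotated])
  with assms(1) show ?thesis
    by (auto simp: S_def)
qed

lemma span_bcontfun_mult_closed: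
  fixes G :: "('a::topological_space \<Rightarrow>\<^sub>C real) set"
  assumes mult: "\<And>g h. g \<in> G \<Longrightarrow> h \<in> G \<Longrightarrow> \<exists>k\<in>G. \<forall>x. k x = g x * h x"
    and "g \<in> span G" "h \<in> span G"
  shows "\<exists>k\<in>span G. \<forall>x. k x = g x * h x"
proof -
  have generator_left: "\<exists>k\<in>span G. \<forall>x. k x = g x * h x" if "g \<in> G" "h \<in> span G" for g h
  proof -
    have "\<exists>k\<in>span G. \<forall>x. k x = h x * g x"
      using \<open>h \<in> span G\<close>
      by (rule span_bcontfun_mult_left) (use mult[OF _ \<open>g \<in> G\<close>] span_base in blast)
    then show ?thesis
      by (simp add: mult.commute)
  qed
  show ?thesis
    using assms(2) by (rule span_bcontfun_mult_left) (use generator_left assms(3) in blast)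
qed

lemma dense_span_bcontfun:
  fixes G :: "('a::t2_space \<Rightarrow>\<^sub>C real) set"
  assumes "compact (UNIV :: 'a set)"
    and one: "\<exists>g\<in>G. \<forall>x. g x = 1"
    and mult: "\<And>g h. g \<in> G \<Longrightarrow> h \<in> G \<Longrightarrow> \<exists>k\<in>G. \<forall>x. k x = g x * h x"
    and separating: "\<And>x y. x \<noteq> y \<Longrightarrow> \<exists>g\<in>G. g x \<noteq> g y"
  shows "closure (span G) = UNIV"
proof -
  have span_mult: "\<exists>k\<in>span G. \<forall>x. k x = g x * h x" if "g \<in> span G" "h \<in> span G" for g h
    using mult that by (rule span_bcontfun_mult_closed)
  interpret function_ring_on "apply_bcontfun ` span G" UNIV
  proof
    show "(\<lambda>x. f x + g x) \<in> apply_bcontfun ` span G"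
      if "f \<in> apply_bcontfun ` span G" "g \<in> apply_bcontfun ` span G" for f g
      using that by (auto intro!: image_eqI[where x="_ + _"] span_add)
    show "(\<lambda>x. f x * g x) \<in> apply_bcontfun ` span G"
      if "f \<in> apply_bcontfun ` span G" "g \<in> apply_bcontfun ` span G" for f g
    proof -
      from that obtain f' g' where "f' \<in> span G" "g' \<in> span G"
        and "f = apply_bcontfun f'" "g = apply_bcontfun g'"
        by blast
      with span_mult obtain k where "k \<in> span G" "\<forall>x. k x = f x * g x"
        by blast
      then show ?thesis
        by (auto intro!: image_eqI[of _ _ k])
    qed
    show "(\<lambda>_. c) \<in> apply_bcontfun ` span G" for c
    proof -
      from one obtain g where "g \<in> G" "\<forall>x. g x = 1"
        by blast
      then show ?thesis
        by (intro image_eqI[of _ _ "c *\<^sub>R g"] span_scale span_base) auto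
    qed
    show "\<exists>f\<in>apply_bcontfun ` span G. f x \<noteq> f y" if "x \<noteq> y" for x y
      using separating[OF that] by (auto intro: span_base)
  qed (use assms(1) in auto)
  have "f \<in> closure (span G)" for f
  proof (unfold closure_approachable, intro allI impI)
    fix e :: real
    assume "0 < e"
    then obtain g where "g \<in> span G" "\<forall>x. \<bar>f x - g x\<bar> < e / 2"
      using Stone_Weierstrass_basic[of f "e / 2"] by auto
    then have "dist g f \<le> e / 2"
      by (intro dist_bound) (simp add: dist_real_def abs_minus_commute less_imp_le)
    with \<open>0 < e\<close> \<open>g \<in> span G\<close> show "\<exists>g\<in>span G. dist g f < e"
      by (intro bexI[of _ g]) auto
  qed
  then show ?thesis
    by blast
qed

lemma countable_dense_span_bcontfunE:
  assumes "compact (UNIV :: 'a set)"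
  obtains G :: "('a::metric_space \<Rightarrow>\<^sub>C real) set" where "countable G" "closure (span G) = UNIV"
proof -
  obtain D :: "'a set" where D: "countable D" "\<And>x e. 0 < e \<Longrightarrow> \<exists>d\<in>D. dist x d < e"
    using compact_countable_dense_setE[OF assms] by blast
  define monomial :: "'a list \<Rightarrow> 'a \<Rightarrow> real" where "monomial ds x = (\<Prod>d\<leftarrow>ds. dist x d)" for ds x
  have "continuous_on UNIV (monomial ds)" for ds
    by (induction ds) (auto simp: monomial_def intro!: continuous_intros)
  then have apply_monomial: "apply_bcontfun (Bcontfun (monomial ds)) = monomial ds" for ds
    by (simp add: Bcontfun_inverse compact_continuous_in_bcontfun[OF assms])
  define G where "G = (\<lambda>ds. Bcontfun (monomial ds)) ` lists D"
  show ?thesis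
  proof
    show "countable G"
      using D(1) by (simp add: G_def)
    show "closure (span G) = UNIV"
    proof (rule dense_span_bcontfun[OF assms])
      have "Bcontfun (monomial []) \<in> G"
        by (simp add: G_def)
      then show "\<exists>g\<in>G. \<forall>x. g x = 1"
        by (rule bexI[rotated]) (simp add: apply_monomial monomial_def)
      show "\<exists>k\<in>G. \<forall>x. k x = g x * h x" if "g \<in> G" "h \<in> G" for g h
      proof -
        from that obtain ds es where "ds \<in> lists D" "es \<in> lists D"
          "g = Bcontfun (monomial ds)" "h = Bcontfun (monomial es)"
          by (auto simp: G_def)
        moreover have "Bcontfun (monomial (ds @ es)) \<in> G"
          using \<open>ds \<in> lists D\<close> \<open>es \<in> lists D\<close> by (simp add: G_def)
        ultimately show ?thesis
          by (intro bexI[of _ "Bcontfun (monomial (ds @ es))"])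
            (simp_all add: apply_monomial monomial_def)
      qed
      show "\<exists>g\<in>G. g x \<noteq> g y" if "x \<noteq> y" for x y
      proof -
        obtain d where d: "d \<in> D" "dist x d < dist x y / 2"
          using D(2)[of "dist x y / 2" x] \<open>x \<noteq> y\<close> by auto
        then have "dist x d \<noteq> dist y d"
          using dist_triangle2[of x y d] by linarith
        moreover have "Bcontfun (monomial [d]) \<in> G"
          using d(1) by (simp add: G_def)
        ultimately show ?thesis
          by (intro bexI[of _ "Bcontfun (monomial [d])"])
            (simp_all add: apply_monomial monomial_def)
      qed
    qed
  qed
qed

lemma blinfun_eq_on_dense_span:
  fixes f g :: "'a::real_normed_vector \<Rightarrow>\<^sub>L 'b::real_normed_vector"
  assumes "closure (span G) = UNIV" and "\<And>x. x \<in> G \<Longrightarrow> f x = g x"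
  shows "f = g"
proof -
  have "subspace {x. f x = g x}"
    by (auto simp: subspace_def blinfun.zero_right blinfun.add_right blinfun.scaleR_right)
  then have "span G \<subseteq> {x. f x = g x}"
    by (rule span_minimal[rotated]) (use assms(2) in auto)
  moreover have "closed {x. f x = g x}"
    using blinfun.continuous_on[of UNIV "\<lambda>_. f" "\<lambda>x. x"]
      blinfun.continuous_on[of UNIV "\<lambda>_. g" "\<lambda>x. x"]
    by (intro closed_Collect_eq) simp_all
  ultimately have "closure (span G) \<subseteq> {x. f x = g x}"
    by (rule closure_minimal)
  with assms(1) show ?thesis
    by (auto intro: blinfun_eqI)
qed

section \<open>Convex combinations of powers of V at Dirac measures\<close>

lemma dirac_fun_apply: "dirac_fun \<omega> x = x \<omega>"
proof -
  have "bounded_linear (\<lambda>x::'a::metric_space Xsp. x \<omega>)"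
    by (rule bounded_linear_intro[where K=1]) (auto simp: abs_apply_bcontfun_le)
  then show ?thesis
    by (simp add: dirac_fun_def bounded_linear_Blinfun_apply)
qed

lemma meas_fun_apply:
  assumes "prob_space M" and "sets M = sets borel"
  shows "meas_fun M x = (\<integral>\<omega>. x \<omega> \<partial>M)"
proof -
  interpret prob_space M by fact
  have int: "integrable M (apply_bcontfun x)" for x :: "'a::metric_space Xsp"
    using finite_measure_axioms assms(2)
    by (rule integrable_bounded_continuous[where B="norm x"]) (auto simp: abs_apply_bcontfun_le)
  have "bounded_linear (\<lambda>x::'a Xsp. \<integral>\<omega>. x \<omega> \<partial>M)"
  proof (rule bounded_linear_intro[where K=1])
    show "norm (\<integral>\<omega>. x \<omega> \<partial>M) \<le> norm x * 1" for x :: "'a Xsp"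
    proof -
      have "x \<omega> \<le> norm x" "- norm x \<le> x \<omega>" for \<omega>
        using abs_apply_bcontfun_le[of x \<omega>] by auto
      then have "(\<integral>\<omega>. x \<omega> \<partial>M) \<le> norm x" "- norm x \<le> (\<integral>\<omega>. x \<omega> \<partial>M)"
        by (auto intro!: integral_le_const[OF int] integral_ge_const[OF int])
      then show ?thesis
        by (simp add: abs_le_iff)
    qed
  qed (simp_all add: int)
  then show ?thesis
    by (simp add: meas_fun_def bounded_linear_Blinfun_apply)
qed

lemma Uop_apply:
  assumes "continuous_on UNIV \<phi>"
  shows "Uop \<phi> x \<omega> = x (\<phi> \<omega>)"
proof -
  have comp_bcontfun: "apply_bcontfun x \<circ> \<phi> \<in> bcontfun" for x :: "'a Xsp"
    by (rule bcontfun_normI[where b="norm x"])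
      (auto intro: continuous_on_compose2[OF _ assms] simp: abs_apply_bcontfun_le)
  have apply_comp: "Bcontfun (apply_bcontfun x \<circ> \<phi>) \<omega> = x (\<phi> \<omega>)" for x :: "'a Xsp" and \<omega>
    by (simp add: Bcontfun_inverse[OF comp_bcontfun])
  have "bounded_linear (\<lambda>x::'a Xsp. Bcontfun (apply_bcontfun x \<circ> \<phi>))"
  proof (rule bounded_linear_intro[where K=1])
    show "Bcontfun (apply_bcontfun (x + y) \<circ> \<phi>)
        = Bcontfun (apply_bcontfun x \<circ> \<phi>) + Bcontfun (apply_bcontfun y \<circ> \<phi>)"
      for x y :: "'a Xsp"
      by (rule bcontfun_eqI) (simp only: apply_comp, simp add: apply_comp)
    show "Bcontfun (apply_bcontfun (r *\<^sub>R x) \<circ> \<phi>) = r *\<^sub>R Bcontfun (apply_bcontfun x \<circ> \<phi>)"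
      for r and x :: "'a Xsp"
      by (rule bcontfun_eqI) (simp only: apply_comp, simp add: apply_comp)
    show "norm (Bcontfun (apply_bcontfun x \<circ> \<phi>)) \<le> norm x * 1" for x :: "'a Xsp"
      by (rule norm_bound) (simp only: apply_comp, simp add: abs_apply_bcontfun_le)
  qed
  then show ?thesis
    by (simp add: Uop_def bounded_linear_Blinfun_apply Bcontfun_inverse[OF comp_bcontfun])
qed

lemma Vop_apply: "Vop \<phi> m = m o\<^sub>L Uop \<phi>"
  by (simp add: Vop_def bounded_linear_Blinfun_apply
      bounded_bilinear.bounded_linear_left[OF bounded_bilinear_blinfun_compose])

lemma Vop_dirac_fun:
  assumes "continuous_on UNIV \<phi>"
  shows "Vop \<phi> (dirac_fun \<omega>) = dirac_fun (\<phi> \<omega>)"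
  by (rule blinfun_eqI) (simp add: Vop_apply dirac_fun_apply Uop_apply[OF assms])

lemma Vpow_dirac_fun:
  assumes "continuous_on UNIV \<phi>"
  shows "Vpow \<phi> k (dirac_fun \<omega>) = dirac_fun ((\<phi> ^^ k) \<omega>)"
  by (induction k) (simp_all add: Vpow_def Vop_dirac_fun[OF assms])

lemma Vpow_Vop_commute: "Vpow \<phi> k (Vop \<phi> m) = Vop \<phi> (Vpow \<phi> k m)"
  by (induction k) (simp_all add: Vpow_def)

lemma convex_hull_Vpow_Vop_commute:
  assumes "T \<in> convex hull range (Vpow \<phi>)"
  shows "T (Vop \<phi> m) = Vop \<phi> (T m)"
proof -
  define C where "C = {T :: 'a Xdual \<Rightarrow>\<^sub>L 'a Xdual. \<forall>m. T (Vop \<phi> m) = Vop \<phi> (T m)}"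
  have "subspace C"
    by (auto simp: C_def subspace_def blinfun.add_left blinfun.scaleR_left
        blinfun.add_right blinfun.scaleR_right)
  then have "convex hull range (Vpow \<phi>) \<subseteq> C"
    by (intro hull_minimal subspace_imp_convex) (auto simp: C_def Vpow_Vop_commute)
  with assms show ?thesis
    by (auto simp: C_def)
qed

lemma convex_hull_Vpow_dirac_funE:
  assumes "continuous_on UNIV \<phi>" and "T \<in> convex hull range (Vpow \<phi>)"
  obtains K :: "nat set" and u where "finite K" "\<And>k. k \<in> K \<Longrightarrow> 0 \<le> u k" "sum u K = 1"
    "\<And>\<omega>. T (dirac_fun \<omega>) = (\<Sum>k\<in>K. u k *\<^sub>R dirac_fun ((\<phi> ^^ k) \<omega>))"
proof -
  obtain S u where S: "finite S" "S \<subseteq> range (Vpow \<phi>)" "\<And>v. v \<in> S \<Longrightarrow> 0 \<le> u v" "sum u S = 1"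
    and T: "T = (\<Sum>v\<in>S. u v *\<^sub>R v)"
    using assms(2) unfolding convex_hull_explicit by auto
  \<comment> \<open>\<open>Vpow \<phi>\<close> need not be injective; \<open>inv\<close> picks one exponent per operator in \<open>S\<close>.\<close>
  define K where "K = inv (Vpow \<phi>) ` S"
  have inv: "Vpow \<phi> (inv (Vpow \<phi>) v) = v" if "v \<in> S" for v
    using S(2) that by (auto intro: f_inv_into_f)
  have inj: "inj_on (inv (Vpow \<phi>)) S"
    using S(2) by (rule inj_on_inv_into)
  have reindex: "(\<Sum>k\<in>K. g k) = (\<Sum>v\<in>S. g (inv (Vpow \<phi>) v))" for g :: "nat \<Rightarrow> 'b::comm_monoid_add"
    unfolding K_def using sum.reindex[OF inj] by simp
  show ?thesis
  proof
    show "finite K"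
      using S(1) by (simp add: K_def)
    show "0 \<le> u (Vpow \<phi> k)" if "k \<in> K" for k
      using that S(3) by (auto simp: K_def inv)
    show "(\<Sum>k\<in>K. u (Vpow \<phi> k)) = 1"
      using S(4) by (simp add: reindex inv)
    show "T (dirac_fun \<omega>) = (\<Sum>k\<in>K. u (Vpow \<phi> k) *\<^sub>R dirac_fun ((\<phi> ^^ k) \<omega>))" for \<omega>
      by (simp add: reindex inv T blinfun.sum_left blinfun.scaleR_left
          flip: Vpow_dirac_fun[OF assms(1)])
  qed
qed

lemma convex_hull_Vpow_dirac_fun_bounded:
  assumes "continuous_on UNIV \<phi>" and "T \<in> convex hull range (Vpow \<phi>)"
  shows "\<bar>T (dirac_fun \<omega>) x\<bar> \<le> norm x"
proof -
  obtain K u where K: "finite K" "\<And>k. k \<in> K \<Longrightarrow> 0 \<le> u k" "sum u K = 1"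
    and T: "\<And>\<omega>. T (dirac_fun \<omega>) = (\<Sum>k\<in>K. u k *\<^sub>R dirac_fun ((\<phi> ^^ k) \<omega>))"
    using convex_hull_Vpow_dirac_funE[OF assms] by blast
  have "\<bar>T (dirac_fun \<omega>) x\<bar> \<le> (\<Sum>k\<in>K. \<bar>u k * x ((\<phi> ^^ k) \<omega>)\<bar>)"
    by (simp add: T blinfun.sum_left blinfun.scaleR_left dirac_fun_apply sum_abs)
  also have "\<dots> \<le> (\<Sum>k\<in>K. u k * norm x)"
    using K(2) by (intro sum_mono) (simp add: abs_mult mult_left_mono abs_apply_bcontfun_le)
  also have "\<dots> = norm x"
    using K(3) by (simp flip: sum_distrib_right)
  finally show ?thesis .
qed

lemma continuous_on_convex_hull_Vpow_dirac_fun: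
  assumes "continuous_on UNIV \<phi>" and "T \<in> convex hull range (Vpow \<phi>)"
  shows "continuous_on UNIV (\<lambda>\<omega>. T (dirac_fun \<omega>) x)"
proof -
  obtain K u where "finite K" "\<And>k. k \<in> K \<Longrightarrow> 0 \<le> u k" "sum u K = 1"
    and T: "\<And>\<omega>. T (dirac_fun \<omega>) = (\<Sum>k\<in>K. u k *\<^sub>R dirac_fun ((\<phi> ^^ k) \<omega>))"
    using convex_hull_Vpow_dirac_funE[OF assms] by blast
  show ?thesis
    unfolding T blinfun.sum_left blinfun.scaleR_left dirac_fun_apply
    by (intro continuous_intros continuous_on_compose2[OF continuous_on_apply_bcontfun
          continuous_on_funpow[OF assms(1)]]) auto
qed

lemma integral_convex_hull_Vpow_dirac_fun:
  assumes "continuous_on UNIV \<phi>" and "T \<in> convex hull range (Vpow \<phi>)"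
    and "finite_measure M" "sets M = sets borel" "\<phi> \<in> measurable M M" "distr M M \<phi> = M"
  shows "(\<integral>\<omega>. T (dirac_fun \<omega>) x \<partial>M) = (\<integral>\<omega>. x \<omega> \<partial>M)"
proof -
  interpret finite_measure M by fact
  obtain K u where "finite K" "\<And>k. k \<in> K \<Longrightarrow> 0 \<le> u k" and K: "sum u K = 1"
    and T: "\<And>\<omega>. T (dirac_fun \<omega>) = (\<Sum>k\<in>K. u k *\<^sub>R dirac_fun ((\<phi> ^^ k) \<omega>))"
    using convex_hull_Vpow_dirac_funE[OF assms(1,2)] by blast
  have x_measurable: "apply_bcontfun x \<in> borel_measurable M"
    using assms(4) by (rule borel_measurable_continuous_on_sets_borel) simp
  have "integrable M (\<lambda>\<omega>. x ((\<phi> ^^ k) \<omega>))" for k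
    using assms(3,4) by (rule integrable_bounded_continuous[where B="norm x"])
      (auto intro: continuous_on_compose2[OF continuous_on_apply_bcontfun
          continuous_on_funpow[OF assms(1)]]
        simp: abs_apply_bcontfun_le)
  then have "(\<integral>\<omega>. T (dirac_fun \<omega>) x \<partial>M) = (\<Sum>k\<in>K. u k * (\<integral>\<omega>. x ((\<phi> ^^ k) \<omega>) \<partial>M))"
    by (simp add: T blinfun.sum_left blinfun.scaleR_left dirac_fun_apply)
  also have "\<dots> = (\<Sum>k\<in>K. u k * (\<integral>\<omega>. x \<omega> \<partial>M))"
    by (simp add: integral_funpow_preserving[OF assms(5,6) x_measurable])
  also have "\<dots> = (\<integral>\<omega>. x \<omega> \<partial>M)"
    using K by (simp flip: sum_distrib_right)
  finally show ?thesis .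
qed

section \<open>Invariant functions for an ergodic measure\<close>

lemma phi_ergodic_AE_le_integral:
  fixes f :: "'a::metric_space \<Rightarrow> real"
  assumes erg: "phi_ergodic \<phi> \<mu>" and f: "integrable \<mu> f" and inv: "\<And>\<omega>. f (\<phi> \<omega>) = f \<omega>"
  shows "AE \<omega> in \<mu>. f \<omega> \<le> (\<integral>\<omega>. f \<omega> \<partial>\<mu>)"
proof -
  interpret prob_space \<mu>
    using erg by (simp add: phi_ergodic_def)
  have space: "space \<mu> = UNIV"
    using erg by (metis phi_ergodic_def sets_eq_imp_space_eq space_borel)
  define c where "c = (\<integral>\<omega>. f \<omega> \<partial>\<mu>)"
  define A where "A = {\<omega>. c < f \<omega>}"
  have "{\<omega>\<in>space \<mu>. c < f \<omega>} \<in> sets \<mu>"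
    using borel_measurable_integrable[OF f] by measurable
  then have A: "A \<in> sets \<mu>"
    by (simp add: A_def space)
  have "\<phi> -` A = A"
    using inv by (auto simp: A_def)
  with erg A have "emeasure \<mu> A = 0 \<or> emeasure \<mu> A = 1"
    by (simp add: phi_ergodic_def)
  moreover have "emeasure \<mu> A \<noteq> 1"
  proof
    assume "emeasure \<mu> A = 1"
    then have "AE \<omega> in \<mu>. c < f \<omega>"
      using AE_in_set_eq_1[OF A] by (simp add: A_def emeasure_eq_measure)
    then have "(\<integral>\<omega>. c \<partial>\<mu>) < (\<integral>\<omega>. f \<omega> \<partial>\<mu>)"
      by (intro integral_less_AE_space f) (simp_all add: emeasure_space_1)
    then show False
      by (simp add: c_def prob_space)
  qed
  ultimately have "A \<in> null_sets \<mu>"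
    using A by (simp add: null_sets_def)
  from AE_not_in[OF this] show ?thesis
    by (rule eventually_mono) (simp add: A_def c_def)
qed

lemma phi_ergodic_AE_eq_integral:
  fixes f :: "'a::metric_space \<Rightarrow> real"
  assumes "phi_ergodic \<phi> \<mu>" and "integrable \<mu> f" and "\<And>\<omega>. f (\<phi> \<omega>) = f \<omega>"
  shows "AE \<omega> in \<mu>. f \<omega> = (\<integral>\<omega>. f \<omega> \<partial>\<mu>)"
proof -
  have "AE \<omega> in \<mu>. f \<omega> \<le> (\<integral>\<omega>. f \<omega> \<partial>\<mu>)"
    using assms by (rule phi_ergodic_AE_le_integral)
  moreover have "AE \<omega> in \<mu>. - f \<omega> \<le> (\<integral>\<omega>. - f \<omega> \<partial>\<mu>)"
    by (rule phi_ergodic_AE_le_integral[OF assms(1)]) (use assms(2,3) in auto)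
  ultimately show ?thesis
    by eventually_elim simp
qed

section \<open>The limit operator at Dirac measures\<close>

lemma WsO_limit_Vop_commute:
  assumes "WsO_conv Vs Q" and "\<And>n m. Vs n (Vop \<phi> m) = Vop \<phi> (Vs n m)"
  shows "Q (Vop \<phi> m) = Vop \<phi> (Q m)"
proof (rule blinfun_eqI)
  fix x
  have "(\<lambda>n. Vs n (Vop \<phi> m) x) \<longlonglongrightarrow> Q (Vop \<phi> m) x"
    using assms(1) by (simp add: WsO_conv_def)
  moreover have "(\<lambda>n. Vs n (Vop \<phi> m) x) \<longlonglongrightarrow> Vop \<phi> (Q m) x"
    using assms(1) unfolding assms(2) by (simp add: WsO_conv_def Vop_apply)
  ultimately show "Q (Vop \<phi> m) x = Vop \<phi> (Q m) x"
    by (rule LIMSEQ_unique)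
qed

lemma ergodic_seq_WsO_limit_Vop_fixed:
  assumes "ergodic_seq \<phi> Vs" and "WsO_conv Vs Q"
  shows "Vop \<phi> (Q m) = Q m"
proof (rule blinfun_eqI)
  fix x
  have "(\<lambda>n. Vs n m x - Vop \<phi> (Vs n m) x) \<longlonglongrightarrow> 0"
    using assms(1) by (simp add: ergodic_seq_def blinfun.diff_left)
  moreover have "(\<lambda>n. Vs n m x - Vop \<phi> (Vs n m) x) \<longlonglongrightarrow> Q m x - Vop \<phi> (Q m) x"
    using assms(2) by (auto simp: WsO_conv_def Vop_apply intro: tendsto_diff)
  ultimately have "Q m x - Vop \<phi> (Q m) x = 0"
    by (rule LIMSEQ_unique[rotated])
  then show "Vop \<phi> (Q m) x = Q m x"
    by simp
qed

lemma ergodic_seq_WsO_limit_dirac_fun_invariant: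
  assumes "continuous_on UNIV \<phi>" and "ergodic_seq \<phi> Vs" and "WsO_conv Vs Q"
  shows "Q (dirac_fun (\<phi> \<omega>)) = Q (dirac_fun \<omega>)"
proof -
  have "Q (dirac_fun (\<phi> \<omega>)) = Q (Vop \<phi> (dirac_fun \<omega>))"
    by (simp add: Vop_dirac_fun[OF assms(1)])
  also have "\<dots> = Vop \<phi> (Q (dirac_fun \<omega>))"
    using assms(2) by (intro WsO_limit_Vop_commute[OF assms(3)] convex_hull_Vpow_Vop_commute)
      (simp add: ergodic_seq_def)
  also have "\<dots> = Q (dirac_fun \<omega>)"
    using assms(2,3) by (rule ergodic_seq_WsO_limit_Vop_fixed)
  finally show ?thesis .
qed

lemma WsO_limit_dirac_fun_integral:
  assumes cont: "continuous_on UNIV \<phi>" and hull: "\<And>n. Vs n \<in> convex hull range (Vpow \<phi>)"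
    and lim: "WsO_conv Vs Q"
    and M: "finite_measure M" "sets M = sets borel" "\<phi> \<in> measurable M M" "distr M M \<phi> = M"
  shows "integrable M (\<lambda>\<omega>. Q (dirac_fun \<omega>) x)" and "(\<integral>\<omega>. Q (dirac_fun \<omega>) x \<partial>M) = (\<integral>\<omega>. x \<omega> \<partial>M)"
proof -
  interpret finite_measure M by fact
  have conv: "(\<lambda>n. Vs n (dirac_fun \<omega>) x) \<longlonglongrightarrow> Q (dirac_fun \<omega>) x" for \<omega>
    using lim by (simp add: WsO_conv_def)
  have bounded: "\<bar>Vs n (dirac_fun \<omega>) x\<bar> \<le> norm x" for n \<omega>
    by (rule convex_hull_Vpow_dirac_fun_bounded[OF cont hull])
  have measurable: "(\<lambda>\<omega>. Vs n (dirac_fun \<omega>) x) \<in> borel_measurable M" for n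
    using M(2) by (rule borel_measurable_continuous_on_sets_borel)
      (rule continuous_on_convex_hull_Vpow_dirac_fun[OF cont hull])
  have "(\<lambda>\<omega>. Q (dirac_fun \<omega>) x) \<in> borel_measurable M"
    using conv measurable by (rule borel_measurable_LIMSEQ_real)
  moreover have "\<bar>Q (dirac_fun \<omega>) x\<bar> \<le> norm x" for \<omega>
    by (rule LIMSEQ_le_const2[OF tendsto_rabs[OF conv]]) (use bounded in auto)
  ultimately show int: "integrable M (\<lambda>\<omega>. Q (dirac_fun \<omega>) x)"
    by (intro integrable_const_bound[where B="norm x"]) auto
  have "(\<lambda>n. \<integral>\<omega>. Vs n (dirac_fun \<omega>) x \<partial>M) \<longlonglongrightarrow> (\<integral>\<omega>. Q (dirac_fun \<omega>) x \<partial>M)"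
  proof (rule integral_dominated_convergence[where w="\<lambda>_. norm x"])
    show "(\<lambda>\<omega>. Q (dirac_fun \<omega>) x) \<in> borel_measurable M"
      using int by (rule borel_measurable_integrable)
  qed (use measurable conv bounded in simp_all)
  moreover have "(\<integral>\<omega>. Vs n (dirac_fun \<omega>) x \<partial>M) = (\<integral>\<omega>. x \<omega> \<partial>M)" for n
    using M by (intro integral_convex_hull_Vpow_dirac_fun[OF cont hull])
  ultimately show "(\<integral>\<omega>. Q (dirac_fun \<omega>) x \<partial>M) = (\<integral>\<omega>. x \<omega> \<partial>M)"
    by (simp add: LIMSEQ_const_iff)
qed

lemma ergodic_seq_WsO_limit_dirac_fun_AE_eq:
  assumes cont: "continuous_on UNIV \<phi>" and erg_seq: "ergodic_seq \<phi> Vs"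
    and lim: "WsO_conv Vs Q" and erg: "phi_ergodic \<phi> \<mu>"
  shows "AE \<omega> in \<mu>. Q (dirac_fun \<omega>) x = meas_fun \<mu> x"
proof -
  have hull: "Vs n \<in> convex hull range (Vpow \<phi>)" for n
    using erg_seq by (simp add: ergodic_seq_def)
  have \<mu>: "prob_space \<mu>" "sets \<mu> = sets borel" "\<phi> \<in> measurable \<mu> \<mu>" "distr \<mu> \<mu> \<phi> = \<mu>"
    using erg by (simp_all add: phi_ergodic_def)
  then have "finite_measure \<mu>"
    by (simp add: prob_space_def)
  note integral = WsO_limit_dirac_fun_integral[OF cont hull lim this \<mu>(2-4)]
  have "AE \<omega> in \<mu>. Q (dirac_fun \<omega>) x = (\<integral>\<omega>. Q (dirac_fun \<omega>) x \<partial>\<mu>)"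
    by (rule phi_ergodic_AE_eq_integral[OF erg integral(1)])
      (simp add: ergodic_seq_WsO_limit_dirac_fun_invariant[OF cont erg_seq lim])
  then show ?thesis
    by (simp add: integral(2) meas_fun_apply[OF \<mu>(1,2)])
qed

theorem lemma4p1:
  fixes \<phi> :: "'a::metric_space \<Rightarrow> 'a"
    and Vs :: "nat \<Rightarrow> 'a Xdual \<Rightarrow>\<^sub>L 'a Xdual"
    and Q :: "'a Xdual \<Rightarrow>\<^sub>L 'a Xdual"
    and \<mu> :: "'a measure"
  assumes "compact (UNIV :: 'a set)"
    and "continuous_on UNIV \<phi>"
    and "ergodic_seq \<phi> Vs"
    and "WsO_conv Vs Q"
    and "phi_ergodic \<phi> \<mu>"
  shows "\<exists>\<omega>. Q (dirac_fun \<omega>) = meas_fun \<mu> \<and>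
           (\<forall>x. (\<lambda>n. blinfun_apply (Vs n (dirac_fun \<omega>)) x) \<longlonglongrightarrow> blinfun_apply (meas_fun \<mu>) x)"
proof -
  interpret prob_space \<mu>
    using assms(5) by (simp add: phi_ergodic_def)
  obtain G :: "'a Xsp set" where G: "countable G" "closure (span G) = UNIV"
    using countable_dense_span_bcontfunE[OF assms(1)] by blast
  have "AE \<omega> in \<mu>. \<forall>x\<in>G. Q (dirac_fun \<omega>) x = meas_fun \<mu> x"
    using G(1) ergodic_seq_WsO_limit_dirac_fun_AE_eq[OF assms(2-5)] by (simp add: AE_ball_countable)
  then obtain \<omega> where "\<forall>x\<in>G. Q (dirac_fun \<omega>) x = meas_fun \<mu> x"
    using AE_False eventually_mono by blast
  then have Q\<omega>: "Q (dirac_fun \<omega>) = meas_fun \<mu>"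
    using G(2) by (auto intro: blinfun_eq_on_dense_span)
  moreover have "(\<lambda>n. Vs n (dirac_fun \<omega>) x) \<longlonglongrightarrow> meas_fun \<mu> x" for x
    using assms(4) by (simp add: WsO_conv_def flip: Q\<omega>)
  ultimately show ?thesis
    by blast
qed

end
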